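(* Let $\phi:[0,1]\to[0,1]$ be concave, $\phi(0)=0$, $\phi(1)=1$, continuous at $0$, and suppose its right derivative $\phi'(0)$ at $0$ is finite. Then there exists a constant $K$ such that $\|X\|_{\Lambda_\phi}\le K\|X\|_{M_\phi}$ for all $X\in M_\phi$; consequently $\Lambda_\phi=M_\phi$ and all ri norms with fundamental function $\phi$ are equivalent. Moreover $K=1/\phi(1/\phi'(0))$ is a feasible constant.
   Context: $\Omega=[0,1]$ with Lebesgue measure $\mu$. $X^*(\omega)=\inf\{\lambda\ge0:\mu\{|X|>\lambda\}\le\omega\}$. Lorentz norm $\|X\|_{\Lambda_\phi}=\int_0^1X^*(\omega)\phi'(\omega)\,d\omega$ (for $\phi$ continuous at $0$); Marcinkiewicz norm $\|X\|_{M_\phi}=\sup_{0<t\le1}\frac{\phi(t)}{t}\int_0^tX^*\,d\omega$; $\Lambda_\phi$, $M_\phi$ denote the spaces of measurable $X$ for which these norms are finite. An ri norm is $X\mapsto R(|X|)$ for a rearrangement invariant Banach function norm $R$ on nonnegative measurable functions (positive, homogeneous, subadditive, monotone, Fatou, $R(\chi_E)<\infty$, $\int_EX\le c_ER(X)$, $R(\chi_\Omega)=1$); its fundamental function is $t\mapsto R(\chi_E)$, $\mu(E)=t$. Two norms are equivalent if they define the same space and there are $c_1,c_2>0$ with $c_1\|X\|_1\le\|X\|_2\le c_2\|X\|_1$ on it. *)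

theory Defs
  imports "HOL-Analysis.Analysis"
begin

abbreviation Pm :: "real measure" where "Pm \<equiv> lebesgue_on {0..1}"

definition distf :: "(real \<Rightarrow> real) \<Rightarrow> real \<Rightarrow> real" where
  "distf X l = measure Pm {\<omega> \<in> space Pm. \<bar>X \<omega>\<bar> > l}"

text \<open>Decreasing rearrangement X*(w) = inf{l >= 0 : mu{|X|>l} <= w}, valued in [0,infinity]
  (the infimum of the empty set is infinity).\<close>
definition rearr :: "(real \<Rightarrow> real) \<Rightarrow> real \<Rightarrow> ennreal" where
  "rearr X \<omega> = (INF l \<in> {l. 0 \<le> l \<and> distf X l \<le> \<omega>}. ennreal l)"

definition rderiv :: "(real \<Rightarrow> real) \<Rightarrow> real \<Rightarrow> real" where
  "rderiv f t = Lim (at_right 0) (\<lambda>h. (f (t + h) - f t) / h)"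

definition lorentz_norm :: "(real \<Rightarrow> real) \<Rightarrow> (real \<Rightarrow> real) \<Rightarrow> ennreal" where
  "lorentz_norm \<phi> X = (\<integral>\<^sup>+ \<omega>. rearr X \<omega> * ennreal (rderiv \<phi> \<omega>) \<partial>Pm)"

definition marc_norm :: "(real \<Rightarrow> real) \<Rightarrow> (real \<Rightarrow> real) \<Rightarrow> ennreal" where
  "marc_norm \<phi> X = (SUP t \<in> {0<..1}. ennreal (\<phi> t / t) * (\<integral>\<^sup>+ \<omega>. rearr X \<omega> \<partial>lebesgue_on {0..t}))"

definition lorentz_space :: "(real \<Rightarrow> real) \<Rightarrow> (real \<Rightarrow> real) set" where
  "lorentz_space \<phi> = {X \<in> borel_measurable Pm. lorentz_norm \<phi> X < \<infinity>}"

definition marc_space :: "(real \<Rightarrow> real) \<Rightarrow> (real \<Rightarrow> real) set" where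
  "marc_space \<phi> = {X \<in> borel_measurable Pm. marc_norm \<phi> X < \<infinity>}"

definition nnmeas :: "(real \<Rightarrow> real) \<Rightarrow> bool" where
  "nnmeas X \<longleftrightarrow> X \<in> borel_measurable Pm \<and> (\<forall>\<omega>\<in>space Pm. 0 \<le> X \<omega>)"

text \<open>Rearrangement invariant Banach function norm R on nonnegative measurable functions.\<close>
definition ri_norm :: "((real \<Rightarrow> real) \<Rightarrow> ennreal) \<Rightarrow> bool" where
  "ri_norm R \<longleftrightarrow>
     (\<forall>X. nnmeas X \<longrightarrow> (R X = 0 \<longleftrightarrow> (AE \<omega> in Pm. X \<omega> = 0)))
   \<and> (\<forall>X a. nnmeas X \<longrightarrow> 0 \<le> a \<longrightarrow> R (\<lambda>\<omega>. a * X \<omega>) = ennreal a * R X)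
   \<and> (\<forall>X Y. nnmeas X \<longrightarrow> nnmeas Y \<longrightarrow> R (\<lambda>\<omega>. X \<omega> + Y \<omega>) \<le> R X + R Y)
   \<and> (\<forall>X Y. nnmeas X \<longrightarrow> nnmeas Y \<longrightarrow> (AE \<omega> in Pm. X \<omega> \<le> Y \<omega>) \<longrightarrow> R X \<le> R Y)
   \<and> (\<forall>Xs X. (\<forall>n. nnmeas (Xs n)) \<longrightarrow> nnmeas X \<longrightarrow>
        (AE \<omega> in Pm. incseq (\<lambda>n. Xs n \<omega>) \<and> (\<lambda>n. Xs n \<omega>) \<longlonglongrightarrow> X \<omega>) \<longrightarrow>
        (SUP n. R (Xs n)) = R X)
   \<and> (\<forall>E \<in> sets Pm. R (indicator E) < \<infinity>)
   \<and> (\<forall>E \<in> sets Pm. \<exists>c::real. \<forall>X. nnmeas X \<longrightarrow>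
        (\<integral>\<^sup>+ \<omega>\<in>E. ennreal (X \<omega>) \<partial>Pm) \<le> ennreal c * R X)
   \<and> R (\<lambda>_. 1) = 1
   \<and> (\<forall>X Y. nnmeas X \<longrightarrow> nnmeas Y \<longrightarrow>
        (\<forall>l. emeasure Pm {\<omega> \<in> space Pm. X \<omega> > l} = emeasure Pm {\<omega> \<in> space Pm. Y \<omega> > l})
        \<longrightarrow> R X = R Y)"

definition has_fundamental_function :: "((real \<Rightarrow> real) \<Rightarrow> ennreal) \<Rightarrow> (real \<Rightarrow> real) \<Rightarrow> bool" where
  "has_fundamental_function R \<phi> \<longleftrightarrow>
     (\<forall>E \<in> sets Pm. R (indicator E) = ennreal (\<phi> (measure Pm E)))"

definition ri_space :: "((real \<Rightarrow> real) \<Rightarrow> ennreal) \<Rightarrow> (real \<Rightarrow> real) set" where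
  "ri_space R = {X \<in> borel_measurable Pm. R (\<lambda>\<omega>. \<bar>X \<omega>\<bar>) < \<infinity>}"

definition ri_equiv :: "((real \<Rightarrow> real) \<Rightarrow> ennreal) \<Rightarrow> ((real \<Rightarrow> real) \<Rightarrow> ennreal) \<Rightarrow> bool" where
  "ri_equiv R1 R2 \<longleftrightarrow> ri_space R1 = ri_space R2 \<and>
     (\<exists>c1>0. \<exists>c2>0. \<forall>X \<in> ri_space R1.
        ennreal c1 * R1 (\<lambda>\<omega>. \<bar>X \<omega>\<bar>) \<le> R2 (\<lambda>\<omega>. \<bar>X \<omega>\<bar>) \<and>
        R2 (\<lambda>\<omega>. \<bar>X \<omega>\<bar>) \<le> ennreal c2 * R1 (\<lambda>\<omega>. \<bar>X \<omega>\<bar>))"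

end

theory Submission
  imports Defs
begin

text \<open>
  Concavity makes the right derivative \<open>\<phi>'\<close> antitone on \<open>[0,1)\<close> with \<open>\<phi>'(0) = d\<close>, so
  \<open>\<phi> t \<le> d t\<close>, and telescoping left Riemann sums gives \<open>\<integral>\<^sub>0\<^sup>m \<phi>' \<le> \<phi> m \<le> d min m (1/d)\<close>:
  on initial segments the weight \<open>\<phi>'\<close> integrates to at most what \<open>d\<close> times the indicator
  of \<open>[0,1/d]\<close> does. Since \<open>X\<^sup>*\<close> is antitone, the layer-cake formula turns this into
  \<open>\<integral>\<^sub>0\<^sup>1 X\<^sup>* \<phi>' \<le> d \<integral>\<^sub>0\<^sup>t X\<^sup>*\<close> with \<open>t = 1/d\<close>, which is \<open>1/\<phi> t\<close> times the average
  \<open>\<phi> t / t \<integral>\<^sub>0\<^sup>t X\<^sup>*\<close> occurring in the Marcinkiewicz norm. Conversely that norm is at most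
  \<open>d \<integral>\<^sub>0\<^sup>1 X\<^sup>*\<close>, which is finite on the Lorentz space. Finally \<open>\<phi> t \<le> d t\<close> bounds every
  ri norm with fundamental function \<open>\<phi>\<close> by \<open>d\<close> times the \<open>L\<^sup>1\<close> norm (on simple functions,
  then by the Fatou property), while the axioms bound the \<open>L\<^sup>1\<close> norm by a multiple of any
  ri norm; hence all of them are equivalent to the \<open>L\<^sup>1\<close> norm.
\<close>

section \<open>Concave functions and their right derivatives\<close>

lemma concave_on_slope_le:
  fixes f :: "real \<Rightarrow> real"
  assumes "concave_on I f" "x \<in> I" "y \<in> I" "x < t" "t < y"
  shows "(f y - f x) / (y - x) \<le> (f t - f x) / (t - x)"
    and "(f y - f t) / (y - t) \<le> (f y - f x) / (y - x)"
proof -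
  have "convex_on I (\<lambda>x. - f x)"
    using assms(1) by (simp add: concave_on_def)
  note slopes = convex_on_slope_le[OF this assms(2-5)]
  from slopes(1) show "(f y - f x) / (y - x) \<le> (f t - f x) / (t - x)"
    using assms(4,5) by (simp add: field_simps)
  from slopes(2) show "(f y - f t) / (y - t) \<le> (f y - f x) / (y - x)"
    using assms(4,5) by (simp add: field_simps)
qed

lemma rderiv_eqI:
  "((\<lambda>h. (f (x + h) - f x) / h) \<longlongrightarrow> L) (at_right 0) \<Longrightarrow> rderiv f x = L"
  unfolding rderiv_def by (rule tendsto_Lim) simp_all

lemma concave_on_right_quotient_tendsto:
  fixes f :: "real \<Rightarrow> real"
  assumes f: "concave_on {a..b} f" and x: "a < x" "x < b"
  shows "((\<lambda>h. (f (x + h) - f x) / h) \<longlongrightarrow> rderiv f x) (at_right 0)"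
proof -
  define q where "q h = (f (x + h) - f x) / h" for h
  define L where "L = Inf ((\<lambda>h. - q h) ` ({0<..} \<inter> {..b - x}))"
  have "((\<lambda>h. - q h) \<longlongrightarrow> L) (at 0 within {0<..} \<inter> {..b - x})"
    unfolding L_def
  proof (rule Lim_right_bound)
    fix h k assume hk: "h \<in> {..b - x}" "k \<in> {..b - x}" "0 < h" "h \<le> k"
    show "- q h \<le> - q k"
    proof (cases "h = k")
      case False
      then show ?thesis
        using concave_on_slope_le(1)[OF f, of x "x + k" "x + h"] x hk by (simp add: q_def)
    qed simp
  next
    fix h assume h: "h \<in> {..b - x}" "0 < h"
    then have "q h \<le> (f (x + h) - f a) / (x + h - a)"
      using concave_on_slope_le(2)[OF f, of a "x + h" x] x by (simp add: q_def)
    also have "\<dots> \<le> (f x - f a) / (x - a)"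
      using concave_on_slope_le(1)[OF f, of a "x + h" x] x h by simp
    finally show "- ((f x - f a) / (x - a)) \<le> - q h" by simp
  qed
  moreover have "at 0 within {0<..} \<inter> {..b - x} = at_right (0::real)"
    by (rule at_within_nhd[of _ "{..<b - x}"]) (use x in auto)
  ultimately have "((\<lambda>h. - q h) \<longlongrightarrow> L) (at_right 0)"
    by simp
  then have "(q \<longlongrightarrow> - L) (at_right 0)"
    using tendsto_minus by fastforce
  moreover from this have "rderiv f x = - L"
    unfolding q_def by (rule rderiv_eqI)
  ultimately show ?thesis
    unfolding q_def by simp
qed

lemma concave_on_slope_le_rderiv:
  fixes f :: "real \<Rightarrow> real"
  assumes f: "concave_on {a..b} f"
    and lim: "((\<lambda>h. (f (x + h) - f x) / h) \<longlongrightarrow> rderiv f x) (at_right 0)"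
    and "a \<le> x" "x < z" "z \<le> b"
  shows "(f z - f x) / (z - x) \<le> rderiv f x"
proof (rule tendsto_lowerbound[OF lim _ trivial_limit_at_right_real])
  have "\<forall>\<^sub>F h in at_right 0. h \<in> {0<..<z - x}"
    using assms by (intro eventually_at_right_real) simp
  then show "\<forall>\<^sub>F h in at_right 0. (f z - f x) / (z - x) \<le> (f (x + h) - f x) / h"
  proof eventually_elim
    case (elim h)
    then show ?case
      using concave_on_slope_le(1)[OF f, of x z "x + h"] assms by simp
  qed
qed

lemma concave_on_rderiv_le_slope:
  fixes f :: "real \<Rightarrow> real"
  assumes f: "concave_on {a..b} f" and "a \<le> y" "y < x" "x < b"
  shows "rderiv f x \<le> (f x - f y) / (x - y)"
proof (rule tendsto_upperbound[OF concave_on_right_quotient_tendsto[OF f] _ trivial_limit_at_right_real])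
  have "\<forall>\<^sub>F h in at_right 0. h \<in> {0<..<b - x}"
    using assms by (intro eventually_at_right_real) simp
  then show "\<forall>\<^sub>F h in at_right 0. (f (x + h) - f x) / h \<le> (f x - f y) / (x - y)"
  proof eventually_elim
    case (elim h)
    then have "(f (x + h) - f x) / h \<le> (f (x + h) - f y) / (x + h - y)"
      using concave_on_slope_le(2)[OF f, of y "x + h" x] assms by simp
    also have "\<dots> \<le> (f x - f y) / (x - y)"
      using concave_on_slope_le(1)[OF f, of y "x + h" x] elim assms by simp
    finally show ?case .
  qed
qed (use assms in auto)

section \<open>Integrals of antitone functions\<close>

lemma borel_measurable_antimono_ennreal:
  fixes f :: "real \<Rightarrow> ennreal"
  assumes "antimono f"
  shows "f \<in> borel_measurable borel"
proof (rule borel_measurableI_greater)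
  fix y
  have "is_interval {x. y < f x}"
    unfolding is_interval_1 using assms by (auto simp: antimono_def intro: order_less_le_trans)
  then show "{x \<in> space borel. y < f x} \<in> sets borel"
    using real_interval_borel_measurable by simp
qed

lemma nn_integral_antimono_le_left_sum:
  fixes g :: "real \<Rightarrow> ennreal"
  assumes g: "antimono g" and h: "0 \<le> h"
  shows "(\<integral>\<^sup>+x. g x * indicator {a..<a + real n * h} x \<partial>lborel)
           \<le> (\<Sum>i<n. g (a + real i * h) * ennreal h)"
proof (induction n)
  case (Suc n)
  define c where "c = a + real n * h"
  have [measurable]: "g \<in> borel_measurable borel"
    using g by (rule borel_measurable_antimono_ennreal)
  have "(\<integral>\<^sup>+x. g x * indicator {c..<c + h} x \<partial>lborel) \<le> (\<integral>\<^sup>+x. g c * indicator {c..<c + h} x \<partial>lborel)"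
    by (intro nn_integral_mono) (auto simp: indicator_def intro: antimonoD[OF g])
  also have "\<dots> = g c * ennreal h"
    using h by (simp add: nn_integral_cmult_indicator)
  finally have last_step: "(\<integral>\<^sup>+x. g x * indicator {c..<c + h} x \<partial>lborel) \<le> g c * ennreal h" .
  have "a \<le> c" "a + real (Suc n) * h = c + h"
    using h by (simp_all add: c_def algebra_simps)
  moreover have "indicator {a..<c + h} x = indicator {a..<c} x + (indicator {c..<c + h} x :: ennreal)"
    if "a \<le> c" for x
    using that h by (auto simp: indicator_def)
  ultimately have "(\<integral>\<^sup>+x. g x * indicator {a..<a + real (Suc n) * h} x \<partial>lborel)
      = (\<integral>\<^sup>+x. g x * indicator {a..<c} x \<partial>lborel) + (\<integral>\<^sup>+x. g x * indicator {c..<c + h} x \<partial>lborel)"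
    by (simp add: distrib_left nn_integral_add)
  also have "\<dots> \<le> (\<Sum>i<n. g (a + real i * h) * ennreal h) + g c * ennreal h"
    using Suc.IH last_step unfolding c_def by (rule add_mono)
  finally show ?case
    by (simp add: c_def)
qed simp

lemma emeasure_lborel_Ici: "emeasure lborel {a::real..} = \<infinity>"
proof (rule ccontr)
  assume "emeasure lborel {a..} \<noteq> \<infinity>"
  then obtain r where r: "emeasure lborel {a..} = ennreal r" "0 \<le> r"
    by (cases "emeasure lborel {a..}") auto
  have "emeasure lborel {a..a + r + 1} \<le> emeasure lborel {a..}"
    by (rule emeasure_mono) auto
  then show False
    using r by simp
qed

lemma emeasure_lborel_ennreal_below: "emeasure lborel {l::real. 0 \<le> l \<and> ennreal l < v} = v"
proof (cases v)
  case (real r)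
  then have "{l. 0 \<le> l \<and> ennreal l < v} = {0..<r}"
    by (auto simp: ennreal_less_iff)
  then show ?thesis
    using real by simp
next
  case top
  then have "{l. 0 \<le> l \<and> ennreal l < v} = {0..}"
    by auto
  then show ?thesis
    using top emeasure_lborel_Ici by simp
qed

lemma nn_integral_layer_cake:
  "(\<integral>\<^sup>+l. indicator {x. 0 \<le> l \<and> ennreal l < f x} x \<partial>lborel) = f x"
proof -
  have "(\<integral>\<^sup>+l. indicator {x. 0 \<le> l \<and> ennreal l < f x} x \<partial>lborel)
      = (\<integral>\<^sup>+l. indicator {l. 0 \<le> l \<and> ennreal l < f x} l \<partial>lborel)"
    by (simp add: indicator_def)
  also have "\<dots> = f x"
    by (subst nn_integral_indicator) (simp_all add: emeasure_lborel_ennreal_below)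
  finally show ?thesis .
qed

lemma down_closed_Icc_bounds:
  fixes A :: "real set"
  assumes down: "\<And>x y. x \<le> y \<Longrightarrow> y \<in> A \<Longrightarrow> x \<in> A" and "0 \<in> A" "0 \<le> b"
  obtains m where "0 \<le> m" "m \<le> b" "{..<m} \<subseteq> A" "A \<inter> {0..b} \<subseteq> {0..m}"
proof
  define m where "m = Sup (A \<inter> {0..b})"
  have bdd: "bdd_above (A \<inter> {0..b})" and nonempty: "A \<inter> {0..b} \<noteq> {}"
    using assms by (auto intro: bdd_aboveI[of _ b])
  have upper: "x \<le> m" if "x \<in> A \<inter> {0..b}" for x
    unfolding m_def using that bdd by (rule cSup_upper)
  show "0 \<le> m"
    using upper[of 0] assms(2,3) by simp
  show "m \<le> b"
    unfolding m_def using nonempty by (rule cSup_least) simp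
  show "A \<inter> {0..b} \<subseteq> {0..m}"
    using upper by auto
  show "{..<m} \<subseteq> A"
  proof
    fix x assume "x \<in> {..<m}"
    then have "x < Sup (A \<inter> {0..b})"
      by (simp add: m_def)
    then obtain y where "y \<in> A \<inter> {0..b}" "x < y"
      using less_cSupE[OF _ nonempty] by blast
    then show "x \<in> A"
      using down[of x y] by simp
  qed
qed

lemma nn_integral_down_closed_le:
  fixes g :: "real \<Rightarrow> ennreal"
  assumes down: "\<And>x y. x \<le> y \<Longrightarrow> y \<in> A \<Longrightarrow> x \<in> A"
    and g: "\<And>m. 0 \<le> m \<Longrightarrow> m \<le> b \<Longrightarrow> (\<integral>\<^sup>+x. g x * indicator {0..m} x \<partial>lborel) \<le> ennreal (c * min m t)"
    and "0 \<le> c" "0 \<le> t"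
  shows "(\<integral>\<^sup>+x. indicator A x * g x * indicator {0..b} x \<partial>lborel)
           \<le> (\<integral>\<^sup>+x. indicator A x * ennreal c * indicator {0..t} x \<partial>lborel)"
proof (cases "0 \<in> A \<and> 0 \<le> b")
  case False
  then have "indicator A x * g x * indicator {0..b} x = 0" for x
    using down[of 0 x] by (auto simp: indicator_def)
  then have "(\<integral>\<^sup>+x. indicator A x * g x * indicator {0..b} x \<partial>lborel) = 0"
    by (simp only: nn_integral_0_iff_AE) simp
  then show ?thesis
    by simp
next
  case True
  obtain m where m: "0 \<le> m" "m \<le> b" "{..<m} \<subseteq> A" "A \<inter> {0..b} \<subseteq> {0..m}"
    by (rule down_closed_Icc_bounds[of A b, OF down]) (use True in auto)
  have "(\<integral>\<^sup>+x. indicator A x * g x * indicator {0..b} x \<partial>lborel) \<le> (\<integral>\<^sup>+x. g x * indicator {0..m} x \<partial>lborel)"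
  proof (rule nn_integral_mono)
    fix x
    show "indicator A x * g x * indicator {0..b} x \<le> g x * indicator {0..m} x"
      using m(4) by (cases "x \<in> A \<inter> {0..b}") (auto simp: indicator_def)
  qed
  also have "\<dots> \<le> ennreal (c * min m t)"
    using g m by simp
  also have "\<dots> = (\<integral>\<^sup>+x. ennreal c * indicator {0..<min m t} x \<partial>lborel)"
    using m assms by (simp add: nn_integral_cmult_indicator ennreal_mult)
  also have "\<dots> \<le> (\<integral>\<^sup>+x. indicator A x * ennreal c * indicator {0..t} x \<partial>lborel)"
  proof (rule nn_integral_mono)
    fix x
    show "ennreal c * indicator {0..<min m t} x \<le> indicator A x * ennreal c * indicator {0..t} x"
      using m(3) by (cases "x \<in> {0..<min m t}") (auto simp: indicator_def)
  qed
  finally show ?thesis .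
qed

lemma nn_integral_antimono_weighted_le:
  fixes f g :: "real \<Rightarrow> ennreal"
  assumes f: "antimono f" and g[measurable]: "g \<in> borel_measurable borel"
    and bound: "\<And>m. 0 \<le> m \<Longrightarrow> m \<le> b \<Longrightarrow> (\<integral>\<^sup>+x. g x * indicator {0..m} x \<partial>lborel) \<le> ennreal (c * min m t)"
    and c: "0 \<le> c" and t: "0 \<le> t"
  shows "(\<integral>\<^sup>+x. f x * g x * indicator {0..b} x \<partial>lborel)
           \<le> ennreal c * (\<integral>\<^sup>+x. f x * indicator {0..t} x \<partial>lborel)"
proof -
  have [measurable]: "f \<in> borel_measurable borel"
    using f by (rule borel_measurable_antimono_ennreal)
  \<comment> \<open>Decompose \<open>f\<close> into its level sets, which are initial segments.\<close>
  define level where "level l = {x. 0 \<le> l \<and> ennreal l < f x}" for l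
  have level_measurable: "(\<lambda>(x, l). indicator (level l) x :: ennreal) \<in> borel_measurable (lborel \<Otimes>\<^sub>M lborel)"
    unfolding level_def by measurable
  have level_measurable_at: "(\<lambda>l. indicator (level l) x :: ennreal) \<in> borel_measurable lborel" for x
    unfolding level_def by measurable
  have layer_cake: "(\<integral>\<^sup>+l. indicator (level l) x \<partial>lborel) = f x" for x
    unfolding level_def by (rule nn_integral_layer_cake)
  have level_down: "x \<in> level l" if "x \<le> y" "y \<in> level l" for x y l
    using that antimonoD[OF f, of x y] by (auto simp: level_def intro: order_less_le_trans)
  have "(\<integral>\<^sup>+x. f x * g x * indicator {0..b} x \<partial>lborel)
      = (\<integral>\<^sup>+x. (\<integral>\<^sup>+l. indicator (level l) x * (g x * indicator {0..b} x) \<partial>lborel) \<partial>lborel)"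
    by (simp add: nn_integral_multc[OF level_measurable_at] layer_cake mult.assoc)
  also have "\<dots> = (\<integral>\<^sup>+l. (\<integral>\<^sup>+x. indicator (level l) x * (g x * indicator {0..b} x) \<partial>lborel) \<partial>lborel)"
    by (rule lborel_pair.Fubini'[symmetric]) (use level_measurable in measurable)
  also have "\<dots> \<le> (\<integral>\<^sup>+l. (\<integral>\<^sup>+x. indicator (level l) x * (ennreal c * indicator {0..t} x) \<partial>lborel) \<partial>lborel)"
  proof (rule nn_integral_mono)
    fix l
    show "(\<integral>\<^sup>+x. indicator (level l) x * (g x * indicator {0..b} x) \<partial>lborel)
        \<le> (\<integral>\<^sup>+x. indicator (level l) x * (ennreal c * indicator {0..t} x) \<partial>lborel)"
      using nn_integral_down_closed_le[of "level l", OF level_down bound c t] by (simp add: mult.assoc)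
  qed
  also have "\<dots> = (\<integral>\<^sup>+x. (\<integral>\<^sup>+l. indicator (level l) x * (ennreal c * indicator {0..t} x) \<partial>lborel) \<partial>lborel)"
    by (rule lborel_pair.Fubini') (use level_measurable in measurable)
  also have "\<dots> = (\<integral>\<^sup>+x. f x * (ennreal c * indicator {0..t} x) \<partial>lborel)"
    by (simp add: nn_integral_multc[OF level_measurable_at] layer_cake)
  also have "\<dots> = (\<integral>\<^sup>+x. ennreal c * (f x * indicator {0..t} x) \<partial>lborel)"
    by (simp add: mult.left_commute)
  also have "\<dots> = ennreal c * (\<integral>\<^sup>+x. f x * indicator {0..t} x \<partial>lborel)"
    by (rule nn_integral_cmult) measurable
  finally show ?thesis .
qed

lemma nn_integral_lebesgue_on_eq_lborel:
  "S \<in> sets borel \<Longrightarrow> (\<integral>\<^sup>+x. f x \<partial>lebesgue_on S) = (\<integral>\<^sup>+x. f x * indicator S x \<partial>lborel)"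
  by (simp add: nn_integral_restrict_space nn_integral_completion)

section \<open>Rearrangements\<close>

lemma finite_measure_Pm: "finite_measure Pm"
  by (rule finite_measure_lebesgue_on) simp

lemma measure_Pm_le_one: "measure Pm E \<le> 1"
proof -
  interpret finite_measure Pm
    by (rule finite_measure_Pm)
  have "measure Pm E \<le> measure Pm (space Pm)"
    by (rule bounded_measure)
  then show ?thesis
    by (simp add: measure_restrict_space)
qed

lemma rearr_antimono: "antimono (rearr X)"
  unfolding rearr_def by (rule antimonoI, rule INF_superset_mono) auto

lemma borel_measurable_rearr[measurable]: "rearr X \<in> borel_measurable borel"
  using rearr_antimono by (rule borel_measurable_antimono_ennreal)

lemma rearr_less_top:
  assumes X: "X \<in> borel_measurable Pm" and s: "0 < s"
  shows "rearr X s < \<infinity>"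
proof -
  interpret finite_measure Pm
    by (rule finite_measure_Pm)
  define A where "A n = {\<omega> \<in> space Pm. \<bar>X \<omega>\<bar> > real n}" for n
  have "A n \<in> sets Pm" for n
    unfolding A_def using X by measurable
  then have "range A \<subseteq> sets Pm"
    by auto
  moreover have "decseq A"
    unfolding A_def decseq_def by auto
  ultimately have "(\<lambda>n. measure Pm (A n)) \<longlonglongrightarrow> measure Pm (\<Inter>n. A n)"
    by (rule finite_Lim_measure_decseq)
  moreover have "(\<Inter>n. A n) = {}"
    by (auto simp: A_def) (meson reals_Archimedean2 not_less_iff_gr_or_eq)
  ultimately have "(\<lambda>n. measure Pm (A n)) \<longlonglongrightarrow> 0"
    by simp
  then have "eventually (\<lambda>n. measure Pm (A n) < s) sequentially"
    using s by (rule order_tendstoD(2))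
  then obtain n where "measure Pm (A n) < s"
    by (auto simp: eventually_sequentially)
  then have "rearr X s \<le> ennreal (real n)"
    unfolding rearr_def by (intro INF_lower) (simp add: distf_def A_def)
  then show ?thesis
    using order_le_less_trans by fastforce
qed

lemma marc_norm_ge:
  fixes \<phi> :: "real \<Rightarrow> real" and t :: real
  assumes "0 < t" "t \<le> 1"
  shows "ennreal (\<phi> t / t) * (\<integral>\<^sup>+x. rearr X x \<partial>lebesgue_on {0..t}) \<le> marc_norm \<phi> X"
  unfolding marc_norm_def using assms by (intro SUP_upper2[of t]) auto

section \<open>Rearrangement invariant norms with a sublinear fundamental function\<close>

lemma ri_norm_cmult: "ri_norm R \<Longrightarrow> nnmeas X \<Longrightarrow> 0 \<le> a \<Longrightarrow> R (\<lambda>\<omega>. a * X \<omega>) = ennreal a * R X"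
  unfolding ri_norm_def by blast

lemma ri_norm_add_le: "ri_norm R \<Longrightarrow> nnmeas X \<Longrightarrow> nnmeas Y \<Longrightarrow> R (\<lambda>\<omega>. X \<omega> + Y \<omega>) \<le> R X + R Y"
  unfolding ri_norm_def by blast

lemma ri_norm_mono:
  "ri_norm R \<Longrightarrow> nnmeas X \<Longrightarrow> nnmeas Y \<Longrightarrow> (AE \<omega> in Pm. X \<omega> \<le> Y \<omega>) \<Longrightarrow> R X \<le> R Y"
  unfolding ri_norm_def by blast

lemma ri_norm_SUP_incseq:
  "ri_norm R \<Longrightarrow> (\<And>n. nnmeas (Xs n)) \<Longrightarrow> nnmeas X \<Longrightarrow>
    (AE \<omega> in Pm. incseq (\<lambda>n. Xs n \<omega>) \<and> (\<lambda>n. Xs n \<omega>) \<longlonglongrightarrow> X \<omega>) \<Longrightarrow> (SUP n. R (Xs n)) = R X"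
  unfolding ri_norm_def by blast

lemma ri_norm_set_nn_integral_le:
  "ri_norm R \<Longrightarrow> E \<in> sets Pm \<Longrightarrow>
    \<exists>c::real. \<forall>X. nnmeas X \<longrightarrow> (\<integral>\<^sup>+\<omega>\<in>E. ennreal (X \<omega>) \<partial>Pm) \<le> ennreal c * R X"
  unfolding ri_norm_def by blast

lemma ri_norm_zero: "ri_norm R \<Longrightarrow> R (\<lambda>_. 0) = 0"
  using ri_norm_cmult[of R "\<lambda>_. 0" 0] by (simp add: nnmeas_def)

lemma ri_norm_sum_le:
  assumes R: "ri_norm R" and "finite A" and "\<And>a. a \<in> A \<Longrightarrow> nnmeas (g a)"
  shows "R (\<lambda>x. \<Sum>a\<in>A. g a x) \<le> (\<Sum>a\<in>A. R (g a))"
  using assms(2,3)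
proof (induction A rule: finite_induct)
  case empty
  then show ?case
    using ri_norm_zero[OF R] by simp
next
  case (insert b A)
  have "nnmeas (\<lambda>x. \<Sum>a\<in>A. g a x)"
    using insert.prems unfolding nnmeas_def by (auto intro!: sum_nonneg borel_measurable_sum)
  then have "R (\<lambda>x. g b x + (\<Sum>a\<in>A. g a x)) \<le> R (g b) + R (\<lambda>x. \<Sum>a\<in>A. g a x)"
    using insert.prems by (intro ri_norm_add_le[OF R]) simp_all
  also have "\<dots> \<le> R (g b) + (\<Sum>a\<in>A. R (g a))"
    using insert by (intro add_left_mono) simp
  finally show ?case
    using insert.hyps by simp
qed

lemma ri_norm_cmult_indicator_le:
  assumes R: "ri_norm R" and F: "has_fundamental_function R \<phi>"
    and \<phi>: "\<And>t. t \<in> {0..1} \<Longrightarrow> \<phi> t \<le> d * t" and d: "0 \<le> d"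
    and E: "E \<in> sets Pm" and y: "0 \<le> y"
  shows "R (\<lambda>x. y * indicator E x) \<le> ennreal d * (ennreal y * emeasure Pm E)"
proof -
  have "R (\<lambda>x. y * indicator E x) = ennreal y * ennreal (\<phi> (measure Pm E))"
    using ri_norm_cmult[OF R _ y, of "indicator E"] F E
    by (simp add: nnmeas_def has_fundamental_function_def)
  also have "\<dots> \<le> ennreal y * ennreal (d * measure Pm E)"
    using \<phi> measure_Pm_le_one by (intro mult_left_mono ennreal_leI) simp_all
  also have "\<dots> = ennreal d * (ennreal y * emeasure Pm E)"
    using d y finite_measure.emeasure_eq_measure[OF finite_measure_Pm]
    by (simp add: ennreal_mult mult.left_commute)
  finally show ?thesis .
qed

lemma ri_norm_simple_le:
  assumes R: "ri_norm R" and F: "has_fundamental_function R \<phi>"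
    and \<phi>: "\<And>t. t \<in> {0..1} \<Longrightarrow> \<phi> t \<le> d * t" and d: "0 \<le> d"
    and Y: "simple_function Pm Y" "\<And>x. 0 \<le> Y x"
  shows "R Y \<le> ennreal d * (\<integral>\<^sup>+x. ennreal (Y x) \<partial>Pm)"
proof -
  define V where "V = Y ` space Pm"
  define E where "E y = Y -` {y} \<inter> space Pm" for y
  have V: "finite V" "\<And>y. y \<in> V \<Longrightarrow> 0 \<le> y"
    using simple_functionD(1)[OF Y(1)] Y(2) by (auto simp: V_def)
  have E: "E y \<in> sets Pm" for y
    unfolding E_def by (rule simple_functionD(2)[OF Y(1)])
  have nn_E: "nnmeas (\<lambda>x. y * indicator (E y) x)" if "y \<in> V" for y
    unfolding nnmeas_def using E V(2)[OF that] by auto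
  have Y_eq: "Y x = (\<Sum>y\<in>V. y * indicator (E y) x)" if "x \<in> space Pm" for x
    unfolding V_def E_def by (rule simple_function_indicator_representation_real[OF Y(1) that Y(2)])
  have "(\<lambda>x. \<Sum>y\<in>V. y * indicator (E y) x) \<in> borel_measurable Pm"
    using E by (intro borel_measurable_sum borel_measurable_times borel_measurable_const borel_measurable_indicator)
  then have nn: "nnmeas Y" "nnmeas (\<lambda>x. \<Sum>y\<in>V. y * indicator (E y) x)"
    unfolding nnmeas_def using borel_measurable_simple_function[OF Y(1)] Y(2) V
    by (auto intro!: sum_nonneg)
  have "R Y \<le> R (\<lambda>x. \<Sum>y\<in>V. y * indicator (E y) x)"
    using Y_eq by (intro ri_norm_mono[OF R nn] AE_I2) simp
  also have "\<dots> \<le> (\<Sum>y\<in>V. R (\<lambda>x. y * indicator (E y) x))"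
    using nn_E V by (intro ri_norm_sum_le[OF R]) simp_all
  also have "\<dots> \<le> (\<Sum>y\<in>V. ennreal d * (ennreal y * emeasure Pm (E y)))"
    using E V by (intro sum_mono ri_norm_cmult_indicator_le[OF R F \<phi> d]) simp_all
  also have "\<dots> = ennreal d * (\<integral>\<^sup>+x. (\<Sum>y\<in>V. ennreal y * indicator (E y) x) \<partial>Pm)"
    using E by (simp add: sum_distrib_left nn_integral_sum nn_integral_cmult_indicator)
  also have "(\<integral>\<^sup>+x. (\<Sum>y\<in>V. ennreal y * indicator (E y) x) \<partial>Pm) = (\<integral>\<^sup>+x. ennreal (Y x) \<partial>Pm)"
  proof (rule nn_integral_cong)
    fix x assume x: "x \<in> space Pm"
    have "(\<Sum>y\<in>V. ennreal y * indicator (E y) x) = (\<Sum>y\<in>V. ennreal (y * indicator (E y) x))"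
      by (intro sum.cong) (auto simp: indicator_def)
    also have "\<dots> = ennreal (Y x)"
      using V Y_eq[OF x] by simp
    finally show "(\<Sum>y\<in>V. ennreal y * indicator (E y) x) = ennreal (Y x)" .
  qed
  finally show ?thesis .
qed

lemma ri_norm_le_nn_integral:
  assumes R: "ri_norm R" and F: "has_fundamental_function R \<phi>"
    and \<phi>: "\<And>t. t \<in> {0..1} \<Longrightarrow> \<phi> t \<le> d * t" and d: "0 \<le> d"
    and X: "nnmeas X"
  shows "R X \<le> ennreal d * (\<integral>\<^sup>+x. ennreal (X x) \<partial>Pm)"
proof -
  have [measurable]: "X \<in> borel_measurable Pm" and X_nonneg: "\<And>x. x \<in> space Pm \<Longrightarrow> 0 \<le> X x"
    using X by (auto simp: nnmeas_def)
  obtain f where f: "incseq f" "\<And>i. simple_function Pm (f i)" "\<And>x. bdd_above (range (\<lambda>i. f i x))"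
      "\<And>i x. 0 \<le> f i x" "(\<lambda>x. max 0 (X x)) = (SUP i. f i)"
    using borel_measurable_implies_simple_function_sequence_real[of "\<lambda>x. max 0 (X x)" Pm] by auto
  have f_incseq: "incseq (\<lambda>i. f i x)" for x
    using f(1) by (auto simp: incseq_def le_fun_def)
  have f_SUP: "(SUP i. f i x) = max 0 (X x)" for x
    using fun_cong[OF f(5), of x] by (simp add: image_image)
  have f_le: "f i x \<le> X x" if "x \<in> space Pm" for i x
    using cSUP_upper[OF _ f(3)[of x], of i] f_SUP[of x] X_nonneg[OF that] by simp
  have nn_f: "nnmeas (f i)" for i
    unfolding nnmeas_def using borel_measurable_simple_function[OF f(2)] f(4) by auto
  have "AE x in Pm. incseq (\<lambda>i. f i x) \<and> (\<lambda>i. f i x) \<longlonglongrightarrow> X x"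
  proof (rule AE_I2)
    fix x assume "x \<in> space Pm"
    then show "incseq (\<lambda>i. f i x) \<and> (\<lambda>i. f i x) \<longlonglongrightarrow> X x"
      using LIMSEQ_incseq_SUP[OF f(3)[of x] f_incseq[of x]] f_incseq[of x] f_SUP[of x] X_nonneg
      by simp
  qed
  then have "R X = (SUP i. R (f i))"
    by (rule ri_norm_SUP_incseq[OF R nn_f X, symmetric])
  also have "\<dots> \<le> ennreal d * (\<integral>\<^sup>+x. ennreal (X x) \<partial>Pm)"
  proof (rule SUP_least)
    fix i
    have "R (f i) \<le> ennreal d * (\<integral>\<^sup>+x. ennreal (f i x) \<partial>Pm)"
      by (rule ri_norm_simple_le[OF R F \<phi> d f(2) f(4)])
    also have "\<dots> \<le> ennreal d * (\<integral>\<^sup>+x. ennreal (X x) \<partial>Pm)"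
      using f_le by (intro mult_left_mono nn_integral_mono ennreal_leI) simp_all
    finally show "R (f i) \<le> ennreal d * (\<integral>\<^sup>+x. ennreal (X x) \<partial>Pm)" .
  qed
  finally show ?thesis .
qed

lemma nn_integral_le_ri_norm:
  assumes R: "ri_norm R"
  obtains c where "0 < c" "\<And>X. nnmeas X \<Longrightarrow> (\<integral>\<^sup>+x. ennreal (X x) \<partial>Pm) \<le> ennreal c * R X"
proof -
  obtain c :: real where c: "\<And>X. nnmeas X \<Longrightarrow> (\<integral>\<^sup>+x\<in>space Pm. ennreal (X x) \<partial>Pm) \<le> ennreal c * R X"
    using ri_norm_set_nn_integral_le[OF R sets.top] by blast
  have "(\<integral>\<^sup>+x. ennreal (X x) \<partial>Pm) \<le> ennreal (max c 1) * R X" if "nnmeas X" for X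
  proof -
    have "(\<integral>\<^sup>+x. ennreal (X x) \<partial>Pm) = (\<integral>\<^sup>+x\<in>space Pm. ennreal (X x) \<partial>Pm)"
      by (rule nn_integral_cong) simp
    also have "\<dots> \<le> ennreal c * R X"
      using c[OF that] .
    also have "\<dots> \<le> ennreal (max c 1) * R X"
      by (intro mult_right_mono ennreal_leI) simp_all
    finally show ?thesis .
  qed
  then show ?thesis
    using that[of "max c 1"] by simp
qed

lemma ri_norm_le_cmult_ri_norm:
  assumes R1: "ri_norm R1" "has_fundamental_function R1 \<phi>" and R2: "ri_norm R2"
    and \<phi>: "\<And>t. t \<in> {0..1} \<Longrightarrow> \<phi> t \<le> d * t" and d: "0 < d"
  obtains c where "0 < c" "\<And>X. nnmeas X \<Longrightarrow> R1 X \<le> ennreal c * R2 X"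
proof -
  obtain c2 where c2: "0 < c2" "\<And>X. nnmeas X \<Longrightarrow> (\<integral>\<^sup>+x. ennreal (X x) \<partial>Pm) \<le> ennreal c2 * R2 X"
    using nn_integral_le_ri_norm[OF R2] by blast
  have "R1 X \<le> ennreal (d * c2) * R2 X" if X: "nnmeas X" for X
  proof -
    have "R1 X \<le> ennreal d * (\<integral>\<^sup>+x. ennreal (X x) \<partial>Pm)"
      using ri_norm_le_nn_integral[OF R1 \<phi> _ X] d by simp
    also have "\<dots> \<le> ennreal d * (ennreal c2 * R2 X)"
      using c2(2)[OF X] by (rule mult_left_mono) simp
    finally show ?thesis
      using d c2(1) by (simp add: ennreal_mult mult.assoc)
  qed
  then show ?thesis
    using that[of "d * c2"] d c2(1) by simp
qed

lemma ri_equiv_if_same_fundamental_function: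
  assumes R1: "ri_norm R1" "has_fundamental_function R1 \<phi>"
    and R2: "ri_norm R2" "has_fundamental_function R2 \<phi>"
    and \<phi>: "\<And>t. t \<in> {0..1} \<Longrightarrow> \<phi> t \<le> d * t" and d: "0 < d"
  shows "ri_equiv R1 R2"
proof -
  obtain c12 where c12: "0 < c12" "\<And>X. nnmeas X \<Longrightarrow> R1 X \<le> ennreal c12 * R2 X"
    using ri_norm_le_cmult_ri_norm[OF R1 R2(1) \<phi> d] by blast
  obtain c21 where c21: "0 < c21" "\<And>X. nnmeas X \<Longrightarrow> R2 X \<le> ennreal c21 * R1 X"
    using ri_norm_le_cmult_ri_norm[OF R2 R1(1) \<phi> d] by blast
  have nn_abs: "nnmeas (\<lambda>x. \<bar>X x\<bar>)" if "X \<in> borel_measurable Pm" for X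
    using that by (simp add: nnmeas_def)
  have less_top: "R1 (\<lambda>x. \<bar>X x\<bar>) < \<infinity> \<longleftrightarrow> R2 (\<lambda>x. \<bar>X x\<bar>) < \<infinity>" if "X \<in> borel_measurable Pm" for X
    using c12(2)[OF nn_abs[OF that]] c21(2)[OF nn_abs[OF that]]
    by (auto simp: ennreal_mult_less_top top_unique intro: le_less_trans)
  have lower: "ennreal (1 / c12) * R1 (\<lambda>x. \<bar>X x\<bar>) \<le> R2 (\<lambda>x. \<bar>X x\<bar>)" if "X \<in> borel_measurable Pm" for X
  proof -
    have "ennreal (1 / c12) * R1 (\<lambda>x. \<bar>X x\<bar>) \<le> ennreal (1 / c12) * (ennreal c12 * R2 (\<lambda>x. \<bar>X x\<bar>))"
      using c12(2)[OF nn_abs[OF that]] by (rule mult_left_mono) simp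
    also have "\<dots> = R2 (\<lambda>x. \<bar>X x\<bar>)"
      using c12(1) by (simp add: mult.assoc[symmetric] ennreal_mult[symmetric])
    finally show ?thesis .
  qed
  have upper: "R2 (\<lambda>x. \<bar>X x\<bar>) \<le> ennreal c21 * R1 (\<lambda>x. \<bar>X x\<bar>)" if "X \<in> borel_measurable Pm" for X
    using c21(2)[OF nn_abs[OF that]] .
  show ?thesis
    unfolding ri_equiv_def
  proof (intro conjI)
    show "ri_space R1 = ri_space R2"
      unfolding ri_space_def using less_top by blast
    show "\<exists>c1>0. \<exists>c2>0. \<forall>X\<in>ri_space R1. ennreal c1 * R1 (\<lambda>\<omega>. \<bar>X \<omega>\<bar>) \<le> R2 (\<lambda>\<omega>. \<bar>X \<omega>\<bar>)
        \<and> R2 (\<lambda>\<omega>. \<bar>X \<omega>\<bar>) \<le> ennreal c2 * R1 (\<lambda>\<omega>. \<bar>X \<omega>\<bar>)"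
      using lower upper c12(1) c21(1) by (intro exI[of _ "1 / c12"] exI[of _ c21]) (auto simp: ri_space_def)
  qed
qed

section \<open>Lorentz and Marcinkiewicz norms of a concave function with finite slope at zero\<close>

definition lorentz_weight :: "(real \<Rightarrow> real) \<Rightarrow> real \<Rightarrow> ennreal" where
  "lorentz_weight \<phi> x = (if x < 1 then ennreal (rderiv \<phi> (max 0 x)) else 0)"

locale concave_fundamental_function =
  fixes \<phi> :: "real \<Rightarrow> real" and d :: real
  assumes concave: "concave_on {0..1} \<phi>"
    and range: "\<And>t. t \<in> {0..1} \<Longrightarrow> \<phi> t \<in> {0..1}"
    and zero: "\<phi> 0 = 0" and one: "\<phi> 1 = 1"
    and right_deriv_zero: "(\<phi> has_real_derivative d) (at_right 0)"
begin

lemma right_quotient_tendsto_zero: "((\<lambda>h. (\<phi> (0 + h) - \<phi> 0) / h) \<longlongrightarrow> d) (at_right 0)"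
  using right_deriv_zero by (simp add: has_field_derivative_iff)

lemma rderiv_zero: "rderiv \<phi> 0 = d"
  using right_quotient_tendsto_zero by (rule rderiv_eqI)

lemma right_quotient_tendsto:
  assumes "0 \<le> x" "x < 1"
  shows "((\<lambda>h. (\<phi> (x + h) - \<phi> x) / h) \<longlongrightarrow> rderiv \<phi> x) (at_right 0)"
proof (cases "x = 0")
  case True
  then show ?thesis
    using right_quotient_tendsto_zero by (simp add: rderiv_zero)
next
  case False
  then show ?thesis
    using concave_on_right_quotient_tendsto[OF concave] assms by simp
qed

lemma slope_le_rderiv:
  assumes "0 \<le> x" "x < z" "z \<le> 1"
  shows "(\<phi> z - \<phi> x) / (z - x) \<le> rderiv \<phi> x"
  using concave_on_slope_le_rderiv[OF concave right_quotient_tendsto] assms by simp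

lemma rderiv_le_slope:
  assumes "0 \<le> y" "y < x" "x < 1"
  shows "rderiv \<phi> x \<le> (\<phi> x - \<phi> y) / (x - y)"
  using concave_on_rderiv_le_slope[OF concave] assms by simp

lemma rderiv_antimono:
  assumes "0 \<le> x" "x \<le> y" "y < 1"
  shows "rderiv \<phi> y \<le> rderiv \<phi> x"
proof (cases "x = y")
  case False
  then have "rderiv \<phi> y \<le> (\<phi> y - \<phi> x) / (y - x)"
    using rderiv_le_slope assms by simp
  also have "\<dots> \<le> rderiv \<phi> x"
    using slope_le_rderiv False assms by simp
  finally show ?thesis .
qed simp

lemma rderiv_nonneg:
  assumes "0 \<le> x" "x < 1"
  shows "0 \<le> rderiv \<phi> x"
proof -
  have "0 \<le> (\<phi> 1 - \<phi> x) / (1 - x)"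
    using range[of x] one assms by simp
  also have "\<dots> \<le> rderiv \<phi> x"
    using slope_le_rderiv assms by simp
  finally show ?thesis .
qed

lemma phi_mono:
  assumes "0 \<le> x" "x \<le> y" "y \<le> 1"
  shows "\<phi> x \<le> \<phi> y"
proof (cases "x = y \<or> y = 1")
  case True
  then show ?thesis
    using range[of x] one assms by auto
next
  case False
  then have "0 \<le> (\<phi> 1 - \<phi> x) / (1 - x)"
    using range[of x] one assms by simp
  also have "\<dots> \<le> (\<phi> y - \<phi> x) / (y - x)"
    using concave_on_slope_le(1)[OF concave, of x 1 y] False assms by simp
  finally show ?thesis
    using False assms by (simp add: divide_simps)
qed

lemma phi_le_linear:
  assumes "0 \<le> t" "t \<le> 1"
  shows "\<phi> t \<le> d * t"
proof (cases "t = 0")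
  case False
  then have "(\<phi> t - \<phi> 0) / (t - 0) \<le> d"
    using slope_le_rderiv[of 0 t] rderiv_zero assms by simp
  then show ?thesis
    using False assms zero by (simp add: divide_simps mult.commute)
qed (simp add: zero)

lemma linear_le_phi:
  assumes "0 \<le> t" "t \<le> 1"
  shows "t \<le> \<phi> t"
  using concave_onD_Icc'[OF concave, of t] assms zero one by simp

lemma one_le_d: "1 \<le> d"
  using phi_le_linear[of 1] one by simp

lemma lorentz_weight_antimono: "antimono (lorentz_weight \<phi>)"
  by (rule antimonoI) (auto simp: lorentz_weight_def intro!: ennreal_leI rderiv_antimono)

lemma rderiv_left_sum_le:
  assumes h: "0 < h" and k: "real (Suc k) * h \<le> 1"
  shows "(\<Sum>i<Suc k. rderiv \<phi> (real i * h) * h) \<le> d * h + \<phi> (real k * h)"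
  using k
proof (induction k)
  case 0
  then show ?case
    by (simp add: rderiv_zero zero)
next
  case (Suc k)
  have below_one: "real (Suc k) * h < 1"
    using Suc.prems h by (simp add: algebra_simps)
  then have "rderiv \<phi> (real (Suc k) * h)
      \<le> (\<phi> (real (Suc k) * h) - \<phi> (real k * h)) / (real (Suc k) * h - real k * h)"
    using h by (intro rderiv_le_slope) simp_all
  also have "real (Suc k) * h - real k * h = h"
    by (simp add: algebra_simps)
  finally have "rderiv \<phi> (real (Suc k) * h) * h \<le> \<phi> (real (Suc k) * h) - \<phi> (real k * h)"
    using h by (simp add: pos_le_divide_eq)
  moreover have "(\<Sum>i<Suc k. rderiv \<phi> (real i * h) * h) \<le> d * h + \<phi> (real k * h)"
    using below_one by (intro Suc.IH) simp
  ultimately show ?case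
    by simp
qed

lemma lorentz_weight_integral_Ico_le:
  assumes m: "0 < m" "m \<le> 1"
  shows "(\<integral>\<^sup>+x. lorentz_weight \<phi> x * indicator {0..<m} x \<partial>lborel) \<le> ennreal (d * (m / real (Suc k)) + \<phi> m)"
proof -
  define h where "h = m / real (Suc k)"
  have h: "0 < h" "real (Suc k) * h = m"
    using m by (simp_all add: h_def)
  have below_one: "real i * h < 1" if "i < Suc k" for i
  proof -
    have "real i * h \<le> real k * h"
      using that h by (intro mult_right_mono) simp_all
    also have "\<dots> < m"
      using h by (simp add: algebra_simps)
    finally show ?thesis
      using m by simp
  qed
  have "(\<integral>\<^sup>+x. lorentz_weight \<phi> x * indicator {0..<0 + real (Suc k) * h} x \<partial>lborel)
      \<le> (\<Sum>i<Suc k. lorentz_weight \<phi> (0 + real i * h) * ennreal h)"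
    using h by (intro nn_integral_antimono_le_left_sum lorentz_weight_antimono) simp
  also have "\<dots> = (\<Sum>i<Suc k. ennreal (rderiv \<phi> (real i * h) * h))"
    using below_one h by (intro sum.cong refl) (simp add: lorentz_weight_def rderiv_nonneg ennreal_mult)
  also have "\<dots> = ennreal (\<Sum>i<Suc k. rderiv \<phi> (real i * h) * h)"
    using below_one h by (intro sum_ennreal) (simp add: rderiv_nonneg)
  also have "\<dots> \<le> ennreal (d * h + \<phi> (real k * h))"
    using h m by (intro ennreal_leI rderiv_left_sum_le) simp_all
  also have "\<dots> \<le> ennreal (d * h + \<phi> m)"
    using h m by (intro ennreal_leI add_left_mono phi_mono) (simp_all add: algebra_simps)
  finally show ?thesis
    using h by (simp add: h_def)
qed

lemma lorentz_weight_integral_le: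
  assumes m: "0 \<le> m" "m \<le> 1"
  shows "(\<integral>\<^sup>+x. lorentz_weight \<phi> x * indicator {0..m} x \<partial>lborel) \<le> ennreal (\<phi> m)"
proof -
  have "(\<integral>\<^sup>+x. lorentz_weight \<phi> x * indicator {0..m} x \<partial>lborel)
      = (\<integral>\<^sup>+x. lorentz_weight \<phi> x * indicator {0..<m} x \<partial>lborel)"
    by (rule nn_integral_cong_AE) (use AE_lborel_singleton[of m] in \<open>auto simp: indicator_def\<close>)
  also have "\<dots> \<le> ennreal (\<phi> m)"
  proof (cases "m = 0")
    case False
    have "(\<lambda>k. m / real (Suc k)) \<longlonglongrightarrow> 0"
      using LIMSEQ_Suc[OF lim_const_over_n[of m]] by simp
    then have "(\<lambda>k. ennreal (d * (m / real (Suc k)) + \<phi> m)) \<longlonglongrightarrow> ennreal (d * 0 + \<phi> m)"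
      by (intro tendsto_ennrealI tendsto_intros)
    then show ?thesis
      using lorentz_weight_integral_Ico_le False m by (intro LIMSEQ_le_const) auto
  qed simp
  finally show ?thesis .
qed

lemma marc_norm_le: "marc_norm \<phi> X \<le> ennreal d * (\<integral>\<^sup>+x. rearr X x \<partial>Pm)"
  unfolding marc_norm_def
proof (rule SUP_least)
  fix t :: real assume t: "t \<in> {0<..1}"
  have "ennreal (\<phi> t / t) \<le> ennreal d"
    using phi_le_linear[of t] t by (intro ennreal_leI) (simp add: divide_simps mult.commute)
  moreover have "(\<integral>\<^sup>+x. rearr X x \<partial>lebesgue_on {0..t}) \<le> (\<integral>\<^sup>+x. rearr X x \<partial>Pm)"
    using t by (simp add: nn_integral_lebesgue_on_eq_lborel)
      (intro nn_integral_mono, auto simp: indicator_def)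
  ultimately show "ennreal (\<phi> t / t) * (\<integral>\<^sup>+x. rearr X x \<partial>lebesgue_on {0..t}) \<le> ennreal d * (\<integral>\<^sup>+x. rearr X x \<partial>Pm)"
    by (intro mult_mono) auto
qed

lemma lorentz_norm_le: "lorentz_norm \<phi> X \<le> ennreal d * (\<integral>\<^sup>+x. rearr X x \<partial>lebesgue_on {0..1 / d})"
proof -
  have "lorentz_norm \<phi> X = (\<integral>\<^sup>+x. rearr X x * ennreal (rderiv \<phi> x) * indicator {0..1} x \<partial>lborel)"
    by (simp add: lorentz_norm_def nn_integral_lebesgue_on_eq_lborel)
  also have "\<dots> = (\<integral>\<^sup>+x. rearr X x * lorentz_weight \<phi> x * indicator {0..1} x \<partial>lborel)"
    by (rule nn_integral_cong_AE)
      (use AE_lborel_singleton[of 1] in \<open>auto simp: lorentz_weight_def indicator_def\<close>)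
  also have "\<dots> \<le> ennreal d * (\<integral>\<^sup>+x. rearr X x * indicator {0..1 / d} x \<partial>lborel)"
  proof (rule nn_integral_antimono_weighted_le[OF rearr_antimono])
    show "lorentz_weight \<phi> \<in> borel_measurable borel"
      using lorentz_weight_antimono by (rule borel_measurable_antimono_ennreal)
  next
    fix m :: real assume m: "0 \<le> m" "m \<le> 1"
    have "\<phi> m \<le> d * min m (1 / d)"
      using phi_le_linear[OF m] range[of m] m one_le_d by (auto simp: min_def)
    then show "(\<integral>\<^sup>+x. lorentz_weight \<phi> x * indicator {0..m} x \<partial>lborel) \<le> ennreal (d * min m (1 / d))"
      using lorentz_weight_integral_le[OF m] by (meson ennreal_leI order_trans)
  qed (use one_le_d in auto)
  also have "(\<integral>\<^sup>+x. rearr X x * indicator {0..1 / d} x \<partial>lborel) = (\<integral>\<^sup>+x. rearr X x \<partial>lebesgue_on {0..1 / d})"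
    by (simp add: nn_integral_lebesgue_on_eq_lborel)
  finally show ?thesis .
qed

lemma lorentz_norm_le_marc_norm: "lorentz_norm \<phi> X \<le> ennreal (1 / \<phi> (1 / d)) * marc_norm \<phi> X"
proof -
  define t where "t = 1 / d"
  have t: "0 < t" "t \<le> 1"
    using one_le_d by (auto simp: t_def)
  have phi_t: "0 < \<phi> t"
    using linear_le_phi[of t] t by simp
  have "ennreal (1 / \<phi> t) * ennreal (\<phi> t / t) = ennreal (1 / \<phi> t * (\<phi> t / t))"
    using t phi_t by (intro ennreal_mult[symmetric]) auto
  also have "1 / \<phi> t * (\<phi> t / t) = d"
    using t phi_t by (simp add: t_def)
  finally have d_split: "ennreal (1 / \<phi> t) * ennreal (\<phi> t / t) = ennreal d" .
  have "lorentz_norm \<phi> X \<le> ennreal d * (\<integral>\<^sup>+x. rearr X x \<partial>lebesgue_on {0..t})"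
    unfolding t_def by (rule lorentz_norm_le)
  also have "\<dots> = ennreal (1 / \<phi> t) * (ennreal (\<phi> t / t) * (\<integral>\<^sup>+x. rearr X x \<partial>lebesgue_on {0..t}))"
    by (simp only: d_split[symmetric] mult.assoc)
  also have "\<dots> \<le> ennreal (1 / \<phi> t) * marc_norm \<phi> X"
    using t by (intro mult_left_mono marc_norm_ge) simp_all
  finally show ?thesis
    by (simp add: t_def)
qed

lemma lorentz_norm_ge:
  assumes s: "0 \<le> s" "s < 1"
  shows "ennreal (rderiv \<phi> s) * (\<integral>\<^sup>+x. rearr X x \<partial>lebesgue_on {0..s}) \<le> lorentz_norm \<phi> X"
proof -
  have "ennreal (rderiv \<phi> s) * (\<integral>\<^sup>+x. rearr X x \<partial>lebesgue_on {0..s})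
      = (\<integral>\<^sup>+x. ennreal (rderiv \<phi> s) * (rearr X x * indicator {0..s} x) \<partial>lborel)"
    by (simp add: nn_integral_lebesgue_on_eq_lborel nn_integral_cmult)
  also have "\<dots> \<le> (\<integral>\<^sup>+x. rearr X x * ennreal (rderiv \<phi> x) * indicator {0..1} x \<partial>lborel)"
  proof (rule nn_integral_mono)
    fix x
    have "x \<in> {0..s} \<Longrightarrow> ennreal (rderiv \<phi> s) \<le> ennreal (rderiv \<phi> x)"
      using s by (intro ennreal_leI rderiv_antimono) auto
    then show "ennreal (rderiv \<phi> s) * (rearr X x * indicator {0..s} x) \<le> rearr X x * ennreal (rderiv \<phi> x) * indicator {0..1} x"
      using s by (auto simp: indicator_def mult.commute intro: mult_left_mono)
  qed
  also have "\<dots> = lorentz_norm \<phi> X"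
    by (simp add: lorentz_norm_def nn_integral_lebesgue_on_eq_lborel)
  finally show ?thesis .
qed

lemma nn_integral_rearr_less_top:
  assumes X: "X \<in> lorentz_space \<phi>"
  shows "(\<integral>\<^sup>+x. rearr X x \<partial>Pm) < \<infinity>"
proof -
  \<comment> \<open>\<open>\<phi>'\<close> may vanish near 1, but not at \<open>s\<close>; beyond \<open>s\<close>, \<open>X\<^sup>*\<close> is bounded by \<open>X\<^sup>* s\<close>.\<close>
  define s where "s = 1 / (2 * d)"
  have s: "0 < s" "s < 1"
    using one_le_d by (auto simp: s_def field_simps)
  have "\<phi> s \<le> 1 / 2"
    using phi_le_linear[of s] s one_le_d by (simp add: s_def)
  then have "0 < (\<phi> 1 - \<phi> s) / (1 - s)"
    using s one by simp
  also have "\<dots> \<le> rderiv \<phi> s"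
    using slope_le_rderiv s by simp
  finally have "0 < rderiv \<phi> s" .
  moreover have "ennreal (rderiv \<phi> s) * (\<integral>\<^sup>+x. rearr X x \<partial>lebesgue_on {0..s}) < \<infinity>"
    using lorentz_norm_ge[of s X] s X by (simp add: lorentz_space_def order.strict_trans1)
  ultimately have head: "(\<integral>\<^sup>+x. rearr X x * indicator {0..s} x \<partial>lborel) < \<infinity>"
    by (auto simp: ennreal_mult_less_top nn_integral_lebesgue_on_eq_lborel)
  have "(\<integral>\<^sup>+x. rearr X x \<partial>Pm) = (\<integral>\<^sup>+x. rearr X x * indicator {0..1} x \<partial>lborel)"
    by (simp add: nn_integral_lebesgue_on_eq_lborel)
  also have "\<dots> \<le> (\<integral>\<^sup>+x. rearr X x * indicator {0..s} x + rearr X s * indicator {s..1} x \<partial>lborel)"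
    using antimonoD[OF rearr_antimono, of s] by (intro nn_integral_mono) (auto simp: indicator_def)
  also have "\<dots> = (\<integral>\<^sup>+x. rearr X x * indicator {0..s} x \<partial>lborel) + rearr X s * ennreal (1 - s)"
    using s by (simp add: nn_integral_add nn_integral_cmult_indicator)
  also have "\<dots> < \<infinity>"
    using head rearr_less_top[of X s] X s by (simp add: lorentz_space_def ennreal_mult_less_top)
  finally show ?thesis .
qed

lemma lorentz_space_eq_marc_space: "lorentz_space \<phi> = marc_space \<phi>"
proof (intro set_eqI iffI)
  fix X assume X: "X \<in> marc_space \<phi>"
  then have "ennreal (1 / \<phi> (1 / d)) * marc_norm \<phi> X < \<infinity>"
    by (simp add: marc_space_def ennreal_mult_less_top)
  then have "lorentz_norm \<phi> X < \<infinity>"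
    using lorentz_norm_le_marc_norm by (rule le_less_trans[rotated])
  then show "X \<in> lorentz_space \<phi>"
    using X by (simp add: marc_space_def lorentz_space_def)
next
  fix X assume X: "X \<in> lorentz_space \<phi>"
  then have "ennreal d * (\<integral>\<^sup>+x. rearr X x \<partial>Pm) < \<infinity>"
    using nn_integral_rearr_less_top by (simp add: ennreal_mult_less_top)
  then have "marc_norm \<phi> X < \<infinity>"
    using marc_norm_le by (rule le_less_trans[rotated])
  then show "X \<in> marc_space \<phi>"
    using X by (simp add: marc_space_def lorentz_space_def)
qed

end

theorem theorem25:
  fixes \<phi> :: "real \<Rightarrow> real" and d :: real
  assumes "concave_on {0..1} \<phi>"
    and "\<forall>t\<in>{0..1}. \<phi> t \<in> {0..1}"
    and "\<phi> 0 = 0" and "\<phi> 1 = 1"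
    and "continuous (at 0 within {0..1}) \<phi>"
    and "(\<phi> has_real_derivative d) (at_right 0)"
  shows "(\<exists>K::real. \<forall>X \<in> marc_space \<phi>. lorentz_norm \<phi> X \<le> ennreal K * marc_norm \<phi> X)
       \<and> lorentz_space \<phi> = marc_space \<phi>
       \<and> (\<forall>R1 R2. ri_norm R1 \<and> ri_norm R2 \<and> has_fundamental_function R1 \<phi>
                  \<and> has_fundamental_function R2 \<phi> \<longrightarrow> ri_equiv R1 R2)
       \<and> (\<forall>X \<in> marc_space \<phi>. lorentz_norm \<phi> X \<le> ennreal (1 / \<phi> (1 / d)) * marc_norm \<phi> X)"
proof -
  interpret concave_fundamental_function \<phi> d
    using assms(1-4,6) by unfold_locales auto
  have "ri_equiv R1 R2"
    if "ri_norm R1" "ri_norm R2" "has_fundamental_function R1 \<phi>" "has_fundamental_function R2 \<phi>" for R1 R2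
    using that one_le_d by (intro ri_equiv_if_same_fundamental_function[where d = d]) (auto intro: phi_le_linear)
  then show ?thesis
    using lorentz_norm_le_marc_norm lorentz_space_eq_marc_space by blast
qed

end
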